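(* Let $m\in\mathbb N$, let $X$ be a normed space, and let $z_j\in X$ and $f_j,f_{j,k}\in X^*$ ($1\le j\le m$, $k\in\mathbb N$) be such that $f_j(z_r)=f_{j,k}(z_r)=\delta_{j,r}$ for $1\le j,r\le m$, $k\in\mathbb N$, and $\lim_{k\to\infty}\|f_{j,k}-f_j\|=0$ for $1\le j\le m$. Let $Y=\bigcap_{j=1}^m\ker f_j$ and $Y_k=\bigcap_{j=1}^m\ker f_{j,k}$ for $k\in\mathbb N$. Then $\|x+Y_k\|_{X/Y_k}\to\|x+Y\|_{X/Y}$ as $k\to\infty$ for each $x\in X$.
   Context: $\delta_{j,r}$ is the Kronecker delta; quotient norms are the usual ones. *)

theory Defs
  imports "HOL-Analysis.Analysis"
begin

definition quot_norm :: "'a::real_normed_vector \<Rightarrow> 'a set \<Rightarrow> real" where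
  "quot_norm x Y = (INF y\<in>Y. norm (x - y))"

definition common_kernel :: "nat \<Rightarrow> (nat \<Rightarrow> ('a::real_normed_vector \<Rightarrow>\<^sub>L real)) \<Rightarrow> 'a set" where
  "common_kernel m g = {x. \<forall>j\<in>{1..m}. blinfun_apply (g j) x = 0}"

end

theory Submission
  imports Defs
begin

text \<open>If every element of each of two subspaces lies within relative distance c of the
  other subspace, the quotient norms of x modulo the two differ by at most 2 c \<parallel>x\<parallel>. The kernels
  Y and Y_k are related in this way with c \<longrightarrow> 0: subtracting \<Sum>_j f_{j,k}(y) z_j from y \<in> Y lands
  in Y_k and moves y by at most (\<Sum>_j \<parallel>f_{j,k} - f_j\<parallel> \<parallel>z_j\<parallel>) \<parallel>y\<parallel>, and symmetrically.\<close>

lemma quot_norm_le_norm: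
  assumes "(0::'a::real_normed_vector) \<in> Y"
  shows "quot_norm x Y \<le> norm x"
proof -
  have "quot_norm x Y \<le> norm (x - 0)"
    unfolding quot_norm_def
    by (rule cINF_lower[OF _ assms]) (auto intro: bdd_belowI[where m=0])
  then show ?thesis by simp
qed

lemma quot_norm_le_approx:
  fixes Y Y' :: "'a::real_normed_vector set"
  assumes "0 \<in> Y" "c \<ge> 0"
    and approx: "\<And>y. y \<in> Y \<Longrightarrow> \<exists>y'\<in>Y'. norm (y - y') \<le> c * norm y"
  shows "quot_norm x Y' \<le> (1 + c) * quot_norm x Y + c * norm x"
proof -
  have "(quot_norm x Y' - c * norm x) / (1 + c) \<le> norm (x - y)" if "y \<in> Y" for y
  proof -
    obtain y' where y': "y' \<in> Y'" "norm (y - y') \<le> c * norm y"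
      using approx[OF \<open>y \<in> Y\<close>] by blast
    have "quot_norm x Y' \<le> norm (x - y')"
      unfolding quot_norm_def by (rule cINF_lower[OF _ y'(1)]) (auto intro: bdd_belowI[where m=0])
    also have "\<dots> \<le> norm (x - y) + norm (y - y')"
      using norm_triangle_ineq[of "x - y" "y - y'"] by simp
    also have "\<dots> \<le> norm (x - y) + c * (norm x + norm (x - y))"
    proof -
      have "norm y \<le> norm x + norm (x - y)"
        using norm_triangle_ineq4[of x "x - y"] by simp
      then show ?thesis using y'(2) \<open>c \<ge> 0\<close> mult_left_mono by fastforce
    qed
    finally show ?thesis using \<open>c \<ge> 0\<close> by (simp add: divide_simps algebra_simps)
  qed
  then have "(quot_norm x Y' - c * norm x) / (1 + c) \<le> quot_norm x Y"
    unfolding quot_norm_def[of x Y] using assms(1) by (intro cINF_greatest) auto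
  then show ?thesis using \<open>c \<ge> 0\<close> by (simp add: divide_simps algebra_simps)
qed

lemma quot_norm_dist_le:
  fixes Y Y' :: "'a::real_normed_vector set"
  assumes "0 \<in> Y" "0 \<in> Y'" "c \<ge> 0"
    and "\<And>y. y \<in> Y \<Longrightarrow> \<exists>y'\<in>Y'. norm (y - y') \<le> c * norm y"
    and "\<And>y'. y' \<in> Y' \<Longrightarrow> \<exists>y\<in>Y. norm (y' - y) \<le> c * norm y'"
  shows "\<bar>quot_norm x Y' - quot_norm x Y\<bar> \<le> 2 * c * norm x"
proof -
  have "quot_norm x Y' \<le> (1 + c) * quot_norm x Y + c * norm x"
       "quot_norm x Y \<le> (1 + c) * quot_norm x Y' + c * norm x"
    using quot_norm_le_approx[of Y c Y' x] quot_norm_le_approx[of Y' c Y x] assms by simp_all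
  moreover have "c * quot_norm x Y \<le> c * norm x" "c * quot_norm x Y' \<le> c * norm x"
    using assms(1-3) by (auto intro: mult_left_mono quot_norm_le_norm)
  ultimately show ?thesis by (simp add: algebra_simps abs_le_iff)
qed

lemma common_kernel_approx:
  fixes g h :: "nat \<Rightarrow> ('a::real_normed_vector \<Rightarrow>\<^sub>L real)" and z :: "nat \<Rightarrow> 'a"
  assumes biorth: "\<And>j r. j \<in> {1..m} \<Longrightarrow> r \<in> {1..m} \<Longrightarrow>
             blinfun_apply (h j) (z r) = (if j = r then 1 else 0)"
    and y: "y \<in> common_kernel m g"
  shows "\<exists>y'\<in>common_kernel m h.
           norm (y - y') \<le> (\<Sum>j\<in>{1..m}. norm (h j - g j) * norm (z j)) * norm y"
proof
  define y' where "y' = y - (\<Sum>j\<in>{1..m}. h j y *\<^sub>R z j)"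
  show "y' \<in> common_kernel m h"
    unfolding common_kernel_def
  proof safe
    fix i assume i: "i \<in> {1..m}"
    have "(\<Sum>j\<in>{1..m}. h j y * h i (z j)) = (\<Sum>j\<in>{1..m}. if j = i then h j y else 0)"
      by (rule sum.cong) (use i biorth in auto)
    then show "h i y' = 0"
      using i by (simp add: y'_def blinfun.diff_right blinfun.sum_right blinfun.scaleR_right)
  qed
  have diff: "y - y' = (\<Sum>j\<in>{1..m}. (h j - g j) y *\<^sub>R z j)"
    unfolding y'_def
    by (simp, rule sum.cong) (use y in \<open>auto simp: common_kernel_def blinfun.diff_left\<close>)
  have "norm (y - y') \<le> (\<Sum>j\<in>{1..m}. norm ((h j - g j) y *\<^sub>R z j))"
    unfolding diff by (rule norm_sum)
  also have "\<dots> \<le> (\<Sum>j\<in>{1..m}. norm (h j - g j) * norm (z j) * norm y)"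
  proof (rule sum_mono)
    fix j
    show "norm ((h j - g j) y *\<^sub>R z j) \<le> norm (h j - g j) * norm (z j) * norm y"
      using mult_right_mono[OF norm_blinfun[of "h j - g j" y] norm_ge_zero[of "z j"]]
      by (simp add: algebra_simps)
  qed
  finally show "norm (y - y') \<le> (\<Sum>j\<in>{1..m}. norm (h j - g j) * norm (z j)) * norm y"
    by (simp add: sum_distrib_right)
qed

theorem lemma4p2:
  fixes m :: nat
    and z :: "nat \<Rightarrow> 'a::real_normed_vector"
    and f :: "nat \<Rightarrow> ('a \<Rightarrow>\<^sub>L real)"
    and fk :: "nat \<Rightarrow> nat \<Rightarrow> ('a \<Rightarrow>\<^sub>L real)"
  assumes "\<And>j r. j \<in> {1..m} \<Longrightarrow> r \<in> {1..m} \<Longrightarrow>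
             blinfun_apply (f j) (z r) = (if j = r then 1 else 0)"
    and "\<And>j r k. j \<in> {1..m} \<Longrightarrow> r \<in> {1..m} \<Longrightarrow>
             blinfun_apply (fk k j) (z r) = (if j = r then 1 else 0)"
    and "\<And>j. j \<in> {1..m} \<Longrightarrow> (\<lambda>k. norm (fk k j - f j)) \<longlonglongrightarrow> 0"
  shows "\<forall>x. (\<lambda>k. quot_norm x (common_kernel m (fk k)))
              \<longlonglongrightarrow> quot_norm x (common_kernel m f)"
proof
  fix x :: 'a
  define c where "c k = (\<Sum>j\<in>{1..m}. norm (fk k j - f j) * norm (z j))" for k
  have "c \<longlonglongrightarrow> (\<Sum>j\<in>{1..m}. 0 * norm (z j))"
    unfolding c_def by (intro tendsto_intros) (use assms(3) in auto)
  then have c_lim: "(\<lambda>k. 2 * c k * norm x) \<longlonglongrightarrow> 0"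
    by (auto intro: tendsto_mult_left_zero tendsto_mult_right_zero)
  have dist_le: "norm (quot_norm x (common_kernel m (fk k)) - quot_norm x (common_kernel m f))
                   \<le> 2 * c k * norm x" for k
    unfolding real_norm_def
  proof (rule quot_norm_dist_le)
    show "c k \<ge> 0" unfolding c_def by (intro sum_nonneg) auto
    show "\<exists>y'\<in>common_kernel m (fk k). norm (y - y') \<le> c k * norm y"
      if "y \<in> common_kernel m f" for y
      using common_kernel_approx[of m "fk k" z, OF assms(2) that] unfolding c_def .
    show "\<exists>y\<in>common_kernel m f. norm (y' - y) \<le> c k * norm y'"
      if "y' \<in> common_kernel m (fk k)" for y'
      using common_kernel_approx[of m f z, OF assms(1) that] by (simp add: c_def norm_minus_commute)
  qed (auto simp: common_kernel_def)
  have "(\<lambda>k. quot_norm x (common_kernel m (fk k)) - quot_norm x (common_kernel m f))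
          \<longlonglongrightarrow> 0"
    using Lim_null_comparison[OF always_eventually[OF allI[OF dist_le]] c_lim] .
  then show "(\<lambda>k. quot_norm x (common_kernel m (fk k))) \<longlonglongrightarrow> quot_norm x (common_kernel m f)"
    by (simp add: LIM_zero_iff)
qed

end
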